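(* Let $K\ge 2$ and $N\ge 1$ be integers, $g>0$, $d>0$, $x_0\in\mathbb{R}$, and consider the $K$-PAM Gaussian channel $Y=gX+W$, where $X$ takes values in $\{x_i=x_0+id: i=0,1,\dots,K-1\}$ with a probability distribution $P_X$ satisfying $P_X(x_i)>0$ for all $i$, and $W\sim\mathcal N(0,1)$ is independent of $X$; write $f(y\mid x)=\frac{1}{\sqrt{2\pi}}e^{-(y-gx)^2/2}$. Let $Z:\mathbb{R}\to\{1,\dots,N\}$ be a quantizer that maximizes the mutual information $I(X;Z(Y))$, and assume the resulting posteriors satisfy $P_{X|Z}(x\mid z)>0$ for all $x$ and all $z$ in the range of $Z$. For each such $z$ define $$S(z)=\Big\{y\in\mathbb{R}:\ \sum_{x}P_X(x)f(y\mid x)\ln P_{X|Z}(x\mid z)\ \ge\ \sum_{x}P_X(x)f(y\mid x)\ln P_{X|Z}(x\mid z')\ \text{ for all } z'\neq z \text{ in the range of } Z\Big\}$$ (the set of channel outputs assigned to $z$ by the optimality condition $Z(y)\in\arg\max_{z}\sum_x P_X(x)f(y\mid x)\ln P_{X|Z}(x\mid z)$ satisfied by capacity-maximizing quantizers). Then each $S(z)$ is a union of at most $(N-1)\lfloor\frac{K-1}{2}\rfloor+1$ pairwise disjoint intervals.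
   Context: A quantizer is any measurable map $Z:\mathbb{R}\to\{1,\dots,N\}$ applied to the channel output; $P_{X|Z}$ denotes the conditional distribution of the input given the quantized output $Z(Y)$. Intervals may be unbounded or degenerate (single points). *)

theory Defs
  imports "HOL-Probability.Probability"
begin

definition pam_pt :: "real \<Rightarrow> real \<Rightarrow> nat \<Rightarrow> real" where
  "pam_pt x0 d i = x0 + real i * d"

definition chan_dens :: "real \<Rightarrow> real \<Rightarrow> real \<Rightarrow> real" where
  "chan_dens g x y = normal_density (g * x) 1 y"

definition is_quantizer :: "nat \<Rightarrow> (real \<Rightarrow> nat) \<Rightarrow> bool" where
  "is_quantizer N Z \<longleftrightarrow> (\<forall>y. Z y \<in> {1..N}) \<and> (\<forall>z. Z -` {z} \<in> sets borel)"

definition joint_prob ::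
  "(nat \<Rightarrow> real) \<Rightarrow> real \<Rightarrow> real \<Rightarrow> real \<Rightarrow> (real \<Rightarrow> nat) \<Rightarrow> nat \<Rightarrow> nat \<Rightarrow> real" where
  "joint_prob PX g x0 d Z i z =
     PX i * (LINT y : (Z -` {z}) | lborel. chan_dens g (pam_pt x0 d i) y)"

definition out_prob ::
  "nat \<Rightarrow> (nat \<Rightarrow> real) \<Rightarrow> real \<Rightarrow> real \<Rightarrow> real \<Rightarrow> (real \<Rightarrow> nat) \<Rightarrow> nat \<Rightarrow> real" where
  "out_prob K PX g x0 d Z z = (\<Sum>i<K. joint_prob PX g x0 d Z i z)"

definition posterior ::
  "nat \<Rightarrow> (nat \<Rightarrow> real) \<Rightarrow> real \<Rightarrow> real \<Rightarrow> real \<Rightarrow> (real \<Rightarrow> nat) \<Rightarrow> nat \<Rightarrow> nat \<Rightarrow> real" where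
  "posterior K PX g x0 d Z i z = joint_prob PX g x0 d Z i z / out_prob K PX g x0 d Z z"

definition mutual_info ::
  "nat \<Rightarrow> nat \<Rightarrow> (nat \<Rightarrow> real) \<Rightarrow> real \<Rightarrow> real \<Rightarrow> real \<Rightarrow> (real \<Rightarrow> nat) \<Rightarrow> real" where
  "mutual_info K N PX g x0 d Z =
     (\<Sum>i<K. \<Sum>z\<in>{1..N}.
        (let p = joint_prob PX g x0 d Z i z in
         if p = 0 then 0 else p * ln (p / (PX i * out_prob K PX g x0 d Z z))))"

definition decision_set ::
  "nat \<Rightarrow> (nat \<Rightarrow> real) \<Rightarrow> real \<Rightarrow> real \<Rightarrow> real \<Rightarrow> (real \<Rightarrow> nat) \<Rightarrow> nat \<Rightarrow> real set" where
  "decision_set K PX g x0 d Z z =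
     {y. \<forall>z'\<in>range Z. z' \<noteq> z \<longrightarrow>
          (\<Sum>i<K. PX i * chan_dens g (pam_pt x0 d i) y * ln (posterior K PX g x0 d Z i z))
          \<ge> (\<Sum>i<K. PX i * chan_dens g (pam_pt x0 d i) y * ln (posterior K PX g x0 d Z i z'))}"

end

theory Submission
  imports Defs "HOL-Computational_Algebra.Polynomial"
begin

text \<open>
  For every other output z', the inequality comparing z with z' reads
  sum_i P_X(x_i) f(y|x_i) c_i >= 0 for some real numbers c_i.  Since f(y|x_i) is f(y|x_0) times
  exp(g d y)^i times a constant, the left-hand side is a positive function times a polynomial of
  degree at most K - 1 in the increasing variable t = exp(g d y).  Whenever such a function drops
  below zero and recovers, its derivative is negative and then positive, so k separate negative
  dips force 2k - 1 roots of the derivative: there are at most (K - 1) div 2 dips.  S(z) is the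
  intersection of at most N - 1 sets where such a function is nonnegative, and between two
  consecutive components of S(z) one of these functions dips; hence S(z) has at most
  (N - 1) ((K - 1) div 2) + 1 components, each of them an interval.
\<close>

definition neg_dips_le :: "(real \<Rightarrow> real) \<Rightarrow> nat \<Rightarrow> bool" where
  "neg_dips_le P m \<longleftrightarrow>
     (\<forall>k s w. (\<forall>i\<le>k. 0 \<le> P (s i)) \<longrightarrow> (\<forall>i<k. P (w i) < 0 \<and> s i < w i \<and> w i < s (Suc i)) \<longrightarrow> k \<le> m)"

lemma neg_dips_leD:
  assumes "neg_dips_le P m" "\<forall>i\<le>k. 0 \<le> P (s i)"
    "\<forall>i<k. P (w i) < 0 \<and> s i < w i \<and> w i < s (Suc i)"
  shows "k \<le> m"
  using assms unfolding neg_dips_le_def by blast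

lemma sign_alternations_le_degree:
  fixes q :: "real poly" and u :: "nat \<Rightarrow> real"
  assumes inc: "\<And>i. i < r \<Longrightarrow> u i < u (Suc i)"
    and alternate: "\<And>i. i < r \<Longrightarrow> poly q (u i) * poly q (u (Suc i)) < 0"
  shows "r \<le> degree q"
proof (cases "r = 0")
  case False
  then have "q \<noteq> 0" using alternate[of 0] by auto
  have "\<forall>i<r. \<exists>x. u i < x \<and> x < u (Suc i) \<and> poly q x = 0"
    using inc alternate poly_IVT by blast
  then obtain \<rho> where \<rho>: "\<And>i. i < r \<Longrightarrow> u i < \<rho> i \<and> \<rho> i < u (Suc i) \<and> poly q (\<rho> i) = 0"
    by metis
  have "\<rho> i < \<rho> j" if "i < j" "j < r" for i j
  proof -
    have "u (Suc i) \<le> u j"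
      using lift_Suc_mono_le_ivl[of "{..<r}" u "Suc i" j] inc that by fastforce
    moreover have "\<rho> i < u (Suc i)" "u j < \<rho> j" using \<rho> that by auto
    ultimately show ?thesis by linarith
  qed
  then have "inj_on \<rho> {..<r}"
    by (metis inj_onI lessThan_iff linorder_neqE_nat order_less_irrefl)
  then have "r = card (\<rho> ` {..<r})" by (simp add: card_image)
  also have "\<dots> \<le> card {x. poly q x = 0}"
    by (rule card_mono) (use \<open>q \<noteq> 0\<close> poly_roots_finite \<rho> in auto)
  also have "\<dots> \<le> degree q" by (rule card_poly_roots_bound[OF \<open>q \<noteq> 0\<close>])
  finally show ?thesis .
qed simp

lemma poly_pderiv_neg_between:
  fixes p :: "real poly"
  assumes "a < b" "poly p b < poly p a"
  obtains x where "a < x" "x < b" "poly (pderiv p) x < 0"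
proof -
  obtain x where x: "a < x" "x < b" and mvt: "poly p b - poly p a = (b - a) * poly (pderiv p) x"
    using poly_MVT[OF assms(1)] by blast
  have "(b - a) * poly (pderiv p) x < 0" using mvt assms(2) by linarith
  with assms(1) have "poly (pderiv p) x < 0" by (simp add: mult_less_0_iff)
  with x that show ?thesis by blast
qed

lemma poly_pderiv_pos_between:
  fixes p :: "real poly"
  assumes "a < b" "poly p a < poly p b"
  obtains x where "a < x" "x < b" "poly (pderiv p) x > 0"
  using poly_pderiv_neg_between[of a b "- p"] assms by (auto simp: pderiv_minus)

lemma neg_dips_le_poly: "neg_dips_le (poly p) (degree p div 2)"
  unfolding neg_dips_le_def
proof (intro allI impI)
  fix k and s w :: "nat \<Rightarrow> real"
  assume nonneg: "\<forall>i\<le>k. 0 \<le> poly p (s i)"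
    and dip: "\<forall>i<k. poly p (w i) < 0 \<and> s i < w i \<and> w i < s (Suc i)"
  have "\<exists>x. s i < x \<and> x < w i \<and> poly (pderiv p) x < 0" if "i < k" for i
  proof -
    have "s i < w i" "poly p (w i) < 0" "0 \<le> poly p (s i)" using nonneg dip that by auto
    then show ?thesis using poly_pderiv_neg_between[of "s i" "w i" p] by force
  qed
  then obtain a where a: "\<And>i. i < k \<Longrightarrow> s i < a i \<and> a i < w i \<and> poly (pderiv p) (a i) < 0"
    by metis
  have "\<exists>x. w i < x \<and> x < s (Suc i) \<and> poly (pderiv p) x > 0" if "i < k" for i
  proof -
    have "w i < s (Suc i)" "poly p (w i) < 0" "0 \<le> poly p (s (Suc i))" using nonneg dip that by auto
    then show ?thesis using poly_pderiv_pos_between[of "w i" "s (Suc i)" p] by force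
  qed
  then obtain b where b: "\<And>i. i < k \<Longrightarrow> w i < b i \<and> b i < s (Suc i) \<and> poly (pderiv p) (b i) > 0"
    by metis
  define u where "u j = (if even j then a (j div 2) else b (j div 2))" for j
  have "u j < u (Suc j) \<and> poly (pderiv p) (u j) * poly (pderiv p) (u (Suc j)) < 0"
    if "j < 2 * k - 1" for j
  proof (cases "even j")
    case True
    then have "u j = a (j div 2)" "u (Suc j) = b (j div 2)" "j div 2 < k"
      using that by (auto simp: u_def)
    with a[of "j div 2"] b[of "j div 2"] show ?thesis
      by (auto intro: mult_neg_pos)
  next
    case False
    then have "u j = b (j div 2)" "u (Suc j) = a (Suc (j div 2))" "Suc (j div 2) < k"
      using that by (auto simp: u_def elim!: oddE)
    with a[of "Suc (j div 2)"] b[of "j div 2"] show ?thesis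
      by (auto intro: mult_pos_neg)
  qed
  then have "2 * k - 1 \<le> degree (pderiv p)"
    by (intro sign_alternations_le_degree[of _ u]) auto
  then show "k \<le> degree p div 2"
    by (cases "k = 0") (auto simp: degree_pderiv)
qed

lemma neg_dips_le_mono: "neg_dips_le P m \<Longrightarrow> m \<le> m' \<Longrightarrow> neg_dips_le P m'"
  unfolding neg_dips_le_def using le_trans by blast

lemma neg_dips_le_comp:
  assumes dips: "neg_dips_le F m" and pos: "\<And>y. 0 < E y" and "strict_mono h"
  shows "neg_dips_le (\<lambda>y. E y * F (h y)) m"
  unfolding neg_dips_le_def
proof (intro allI impI)
  fix k and s w :: "nat \<Rightarrow> real"
  assume "\<forall>i\<le>k. 0 \<le> E (s i) * F (h (s i))"
    and "\<forall>i<k. E (w i) * F (h (w i)) < 0 \<and> s i < w i \<and> w i < s (Suc i)"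
  moreover have "0 \<le> E y * F (h y) \<longleftrightarrow> 0 \<le> F (h y)" for y
    using pos[of y] by (simp add: zero_le_mult_iff)
  ultimately have "\<forall>i\<le>k. 0 \<le> F (h (s i))"
    and "\<forall>i<k. F (h (w i)) < 0 \<and> h (s i) < h (w i) \<and> h (w i) < h (s (Suc i))"
    using strict_monoD[OF \<open>strict_mono h\<close>] by (auto simp flip: not_le)
  then show "k \<le> m"
    by (rule neg_dips_leD[OF dips])
qed

lemma neg_dips_le_exp_poly:
  fixes c :: "nat \<Rightarrow> real"
  assumes "0 < a" and "\<And>y. 0 < E y"
  shows "neg_dips_le (\<lambda>y. E y * (\<Sum>i<n. c i * exp (a * y) ^ i)) ((n - 1) div 2)"
proof -
  define q where "q = (\<Sum>i<n. monom (c i) i)"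
  have "degree q \<le> n - 1"
    unfolding q_def by (rule degree_sum_le) (auto intro: order.trans[OF degree_monom_le])
  then have "neg_dips_le (poly q) ((n - 1) div 2)"
    using neg_dips_le_poly div_le_mono neg_dips_le_mono by blast
  moreover have "strict_mono (\<lambda>y. exp (a * y))"
    using \<open>0 < a\<close> by (simp add: strict_mono_def)
  moreover have "poly q t = (\<Sum>i<n. c i * t ^ i)" for t
    by (simp add: q_def poly_sum poly_monom)
  ultimately show ?thesis
    using neg_dips_le_comp[of "poly q" _ E "\<lambda>y. exp (a * y)"] assms(2) by simp
qed

lemma neg_dips_le_card:
  assumes dips: "neg_dips_le P m"
    and interleaved: "\<forall>i<n. s i < w i \<and> w i < s (Suc i)" and nonneg: "\<forall>i\<le>n. 0 \<le> P (s i)"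
  shows "card {i. i < n \<and> P (w i) < 0} \<le> m"
proof -
  let ?k = "\<lambda>n. card {i. i < n \<and> P (w i) < 0}"
  \<comment> \<open>Skipping the gaps where P stays nonnegative leaves a dip sequence ending at s n.\<close>
  have "\<exists>s' w'. s' (?k n) = s n \<and> (\<forall>i\<le>?k n. 0 \<le> P (s' i))
          \<and> (\<forall>i<?k n. P (w' i) < 0 \<and> s' i < w' i \<and> w' i < s' (Suc i))"
    using interleaved nonneg
  proof (induction n)
    case 0
    then show ?case by auto
  next
    case (Suc n)
    then obtain s' w' where s'_last: "s' (?k n) = s n"
      and s'_nonneg: "\<forall>i\<le>?k n. 0 \<le> P (s' i)"
      and dip: "\<forall>i<?k n. P (w' i) < 0 \<and> s' i < w' i \<and> w' i < s' (Suc i)"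
      by auto
    have step: "s n < w n" "w n < s (Suc n)" "0 \<le> P (s (Suc n))" using Suc.prems by auto
    show ?case
    proof (cases "P (w n) < 0")
      case True
      then have "{i. i < Suc n \<and> P (w i) < 0} = insert n {i. i < n \<and> P (w i) < 0}" by auto
      then have "?k (Suc n) = Suc (?k n)" by simp
      with True step s'_last s'_nonneg dip show ?thesis
        by (intro exI[of _ "s'(Suc (?k n) := s (Suc n))"] exI[of _ "w'(?k n := w n)"])
          (auto simp: less_Suc_eq le_Suc_eq)
    next
      case False
      then have "?k (Suc n) = ?k n" by (metis less_Suc_eq)
      define t where "t = s'(?k n := s (Suc n))"
      have "s' j \<le> t j" for j using s'_last step by (auto simp: t_def)
      moreover have "t i = s' i" if "i < ?k n" for i using that by (simp add: t_def)
      ultimately have "\<forall>i<?k n. P (w' i) < 0 \<and> t i < w' i \<and> w' i < t (Suc i)"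
        using dip by (metis order.strict_trans2)
      moreover have "\<forall>i\<le>?k n. 0 \<le> P (t i)" using s'_nonneg step by (auto simp: t_def)
      moreover have "t (?k n) = s (Suc n)" by (simp add: t_def)
      ultimately show ?thesis unfolding \<open>?k (Suc n) = ?k n\<close> by blast
    qed
  qed
  then show ?thesis using neg_dips_leD[OF dips] by blast
qed

lemma card_separated_points_le:
  fixes P :: "'j \<Rightarrow> real \<Rightarrow> real" and T :: "real set"
  assumes "finite J" and dips: "\<forall>j\<in>J. neg_dips_le (P j) m"
    and "finite T" and T: "T \<subseteq> {y. \<forall>j\<in>J. 0 \<le> P j y}"
    and gap: "\<And>x y. x \<in> T \<Longrightarrow> y \<in> T \<Longrightarrow> x < y \<Longrightarrow> \<exists>w. x < w \<and> w < y \<and> (\<exists>j\<in>J. P j w < 0)"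
  shows "card T \<le> card J * m + 1"
proof (cases "T = {}")
  case False
  define n where "n = card T - 1"
  define xs where "xs = sorted_list_of_set T"
  define s where "s i = xs ! i" for i
  have xs: "length xs = n + 1" "set xs = T" "sorted_wrt (<) xs"
    using False \<open>finite T\<close> by (auto simp: xs_def n_def card_gt_0_iff)
  have s_T: "s i \<in> T" if "i \<le> n" for i
    using xs that by (auto simp: s_def)
  have s_inc: "s i < s (Suc i)" if "i < n" for i
    using xs that by (auto simp: s_def sorted_wrt_nth_less)
  have "\<forall>i<n. \<exists>w. s i < w \<and> w < s (Suc i) \<and> (\<exists>j\<in>J. P j w < 0)"
    using gap s_T s_inc by (simp add: Suc_leI)
  then obtain w where w: "\<And>i. i < n \<Longrightarrow> s i < w i \<and> w i < s (Suc i) \<and> (\<exists>j\<in>J. P j (w i) < 0)"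
    by metis
  have "{..<n} \<subseteq> (\<Union>j\<in>J. {i. i < n \<and> P j (w i) < 0})" using w by blast
  then have "n \<le> card (\<Union>j\<in>J. {i. i < n \<and> P j (w i) < 0})"
    using card_mono[of _ "{..<n}"] \<open>finite J\<close> by fastforce
  also have "\<dots> \<le> (\<Sum>j\<in>J. card {i. i < n \<and> P j (w i) < 0})"
    by (rule card_UN_le[OF \<open>finite J\<close>])
  also have "\<dots> \<le> card J * m"
  proof (rule sum_bounded_above[where K = m, simplified])
    fix j assume "j \<in> J"
    with T s_T have "\<forall>i\<le>n. 0 \<le> P j (s i)" by blast
    with dips \<open>j \<in> J\<close> w show "card {i. i < n \<and> P j (w i) < 0} \<le> m"
      by (intro neg_dips_le_card) auto
  qed
  finally show ?thesis unfolding n_def by linarith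
qed simp

lemma components_gap:
  fixes S :: "real set"
  assumes "X \<in> components S" "Y \<in> components S" "X \<noteq> Y" "x \<in> X" "y \<in> Y" "x < y"
  shows "\<exists>w. x < w \<and> w < y \<and> w \<notin> S"
proof (rule ccontr)
  assume "\<nexists>w. x < w \<and> w < y \<and> w \<notin> S"
  moreover have "x \<in> S" "y \<in> S" using assms in_components_subset by blast+
  ultimately have "{x..y} \<subseteq> S" by (auto simp: le_less)
  moreover have "x \<in> X \<inter> {x..y}" using assms(4,6) by auto
  ultimately have "{x..y} \<subseteq> X"
    using components_maximal[OF assms(1) connected_Icc] by blast
  then have "y \<in> X \<inter> Y" using assms(5,6) by auto
  then show False using components_nonoverlap[OF assms(1,2)] assms(3) by blast
qed

lemma card_components_le:
  fixes S :: "real set"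
  assumes bound: "\<And>T. finite T \<Longrightarrow> T \<subseteq> S
      \<Longrightarrow> (\<forall>x\<in>T. \<forall>y\<in>T. x < y \<longrightarrow> (\<exists>w. x < w \<and> w < y \<and> w \<notin> S)) \<Longrightarrow> card T \<le> b"
  shows "finite (components S)" and "card (components S) \<le> b"
proof -
  have card_C: "card C \<le> b" if C: "C \<subseteq> components S" "finite C" for C
  proof -
    have "\<forall>X\<in>C. \<exists>x. x \<in> X" using C(1) in_components_nonempty by fastforce
    then obtain r where r: "\<And>X. X \<in> C \<Longrightarrow> r X \<in> X" by metis
    have "inj_on r C"
    proof (rule inj_onI)
      fix X Y assume "X \<in> C" "Y \<in> C" "r X = r Y"
      then have "r X \<in> X \<inter> Y" by (metis IntI r)
      moreover have "X \<in> components S" "Y \<in> components S"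
        using \<open>X \<in> C\<close> \<open>Y \<in> C\<close> C(1) by auto
      ultimately show "X = Y" using components_nonoverlap[of X S Y] by auto
    qed
    then have "card C = card (r ` C)" by (simp add: card_image)
    also have "\<dots> \<le> b"
    proof (rule bound)
      show "r ` C \<subseteq> S" using r C(1) in_components_subset by blast
      show "\<forall>x\<in>r ` C. \<forall>y\<in>r ` C. x < y \<longrightarrow> (\<exists>w. x < w \<and> w < y \<and> w \<notin> S)"
      proof (intro ballI impI)
        fix x y assume "x \<in> r ` C" "y \<in> r ` C" "x < y"
        then obtain X Y where "X \<in> C" "Y \<in> C" "x = r X" "y = r Y" by blast
        with \<open>x < y\<close> r C(1) show "\<exists>w. x < w \<and> w < y \<and> w \<notin> S"
          by (intro components_gap[of X S Y]) auto
      qed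
    qed (use C in simp)
    finally show ?thesis .
  qed
  show "finite (components S)"
  proof (rule ccontr)
    assume "infinite (components S)"
    then obtain C where "C \<subseteq> components S" "finite C" "card C = Suc b"
      using infinite_arbitrarily_large by blast
    then show False using card_C[of C] by simp
  qed
  then show "card (components S) \<le> b" using card_C[of "components S"] by simp
qed

lemma card_components_nonneg_set_le:
  fixes P :: "'j \<Rightarrow> real \<Rightarrow> real"
  assumes "finite J" and "\<forall>j\<in>J. neg_dips_le (P j) m"
  shows "finite (components {y. \<forall>j\<in>J. 0 \<le> P j y})"
    and "card (components {y. \<forall>j\<in>J. 0 \<le> P j y}) \<le> card J * m + 1"
proof -
  have "card T \<le> card J * m + 1"
    if "finite T" "T \<subseteq> {y. \<forall>j\<in>J. 0 \<le> P j y}"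
      and "\<forall>x\<in>T. \<forall>y\<in>T. x < y \<longrightarrow> (\<exists>w. x < w \<and> w < y \<and> w \<notin> {y. \<forall>j\<in>J. 0 \<le> P j y})" for T
    using that by (intro card_separated_points_le[OF assms]) (auto simp: not_le)
  note bound = this
  show "finite (components {y. \<forall>j\<in>J. 0 \<le> P j y})"
    by (rule card_components_le(1)[OF bound])
  show "card (components {y. \<forall>j\<in>J. 0 \<le> P j y}) \<le> card J * m + 1"
    by (rule card_components_le(2)[OF bound])
qed

lemma disjoint_intervals_of_components:
  fixes S :: "real set"
  assumes "finite (components S)" and "card (components S) \<le> b"
  shows "\<exists>F. finite F \<and> card F \<le> b \<and> (\<forall>I\<in>F. is_interval I) \<and> disjoint F \<and> \<Union>F = S"
proof (intro exI conjI)
  show "\<forall>I\<in>components S. is_interval I"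
    using in_components_connected is_interval_connected_1 by blast
  show "disjoint (components S)"
    using pairwise_disjoint_components by (simp add: disjoint_def pairwise_def disjnt_def)
qed (use assms in auto)

lemma chan_dens_pam_pt:
  "chan_dens g (pam_pt x0 d i) y =
     chan_dens g x0 y * exp (g * d * y) ^ i * exp (- g * d * real i * (g * x0 + g * d * real i / 2))"
proof -
  have "- (y - g * (x0 + real i * d))\<^sup>2 / (2 * 1\<^sup>2) =
        - (y - g * x0)\<^sup>2 / (2 * 1\<^sup>2) + real i * (g * d * y)
          + - g * d * real i * (g * x0 + g * d * real i / 2)"
    by (simp add: power2_eq_square field_simps)
  then have "exp (- (y - g * (x0 + real i * d))\<^sup>2 / (2 * 1\<^sup>2)) =
      exp (- (y - g * x0)\<^sup>2 / (2 * 1\<^sup>2)) * exp (g * d * y) ^ i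
        * exp (- g * d * real i * (g * x0 + g * d * real i / 2))"
    by (simp only: exp_add exp_of_nat_mult)
  then show ?thesis
    unfolding chan_dens_def normal_density_def pam_pt_def by simp
qed

lemma neg_dips_le_pam_statistic:
  assumes "0 < g" and "0 < d"
  shows "neg_dips_le (\<lambda>y. \<Sum>i<K. PX i * chan_dens g (pam_pt x0 d i) y * a i) ((K - 1) div 2)"
proof -
  define c where "c i = PX i * exp (- g * d * real i * (g * x0 + g * d * real i / 2)) * a i" for i
  have "(\<Sum>i<K. PX i * chan_dens g (pam_pt x0 d i) y * a i) =
        chan_dens g x0 y * (\<Sum>i<K. c i * exp (g * d * y) ^ i)" for y
    by (simp add: chan_dens_pam_pt c_def sum_distrib_left mult_ac)
  moreover have
    "neg_dips_le (\<lambda>y. chan_dens g x0 y * (\<Sum>i<K. c i * exp (g * d * y) ^ i)) ((K - 1) div 2)"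
    using assms by (intro neg_dips_le_exp_poly) (auto simp: chan_dens_def normal_density_pos)
  ultimately show ?thesis by simp
qed

lemma decision_set_eq:
  "decision_set K PX g x0 d Z z =
     {y. \<forall>j\<in>range Z - {z}. 0 \<le> (\<Sum>i<K. PX i * chan_dens g (pam_pt x0 d i) y *
            (ln (posterior K PX g x0 d Z i z) - ln (posterior K PX g x0 d Z i j)))}"
  by (auto simp: decision_set_def right_diff_distrib sum_subtractf)

theorem theorem1:
  fixes K N :: nat and g d x0 :: real and PX :: "nat \<Rightarrow> real" and Z :: "real \<Rightarrow> nat"
  assumes "K \<ge> 2" and "N \<ge> 1" and "g > 0" and "d > 0"
    and "\<forall>i<K. PX i > 0" and "(\<Sum>i<K. PX i) = 1"
    and "is_quantizer N Z"
    and "\<forall>Z'. is_quantizer N Z' \<longrightarrow> mutual_info K N PX g x0 d Z' \<le> mutual_info K N PX g x0 d Z"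
    and "\<forall>z\<in>range Z. \<forall>i<K. posterior K PX g x0 d Z i z > 0"
  shows "\<forall>z\<in>range Z. \<exists>F. finite F \<and> card F \<le> (N - 1) * ((K - 1) div 2) + 1
            \<and> (\<forall>I\<in>F. is_interval I) \<and> disjoint F
            \<and> \<Union>F = decision_set K PX g x0 d Z z"
proof
  fix z assume "z \<in> range Z"
  let ?J = "range Z - {z}"
  have "range Z \<subseteq> {1..N}" using \<open>is_quantizer N Z\<close> by (auto simp: is_quantizer_def)
  then have "finite ?J" and "card ?J \<le> N - 1"
    using \<open>z \<in> range Z\<close> card_mono[of "{1..N}" "range Z"] finite_subset[of "range Z" "{1..N}"]
    by (simp_all add: card_Diff_singleton)
  have "\<forall>j\<in>?J. neg_dips_le (\<lambda>y. \<Sum>i<K. PX i * chan_dens g (pam_pt x0 d i) y *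
          (ln (posterior K PX g x0 d Z i z) - ln (posterior K PX g x0 d Z i j))) ((K - 1) div 2)"
    using \<open>g > 0\<close> \<open>d > 0\<close> by (intro ballI neg_dips_le_pam_statistic)
  note components = card_components_nonneg_set_le[OF \<open>finite ?J\<close> this, folded decision_set_eq]
  have "card ?J * ((K - 1) div 2) \<le> (N - 1) * ((K - 1) div 2)"
    using \<open>card ?J \<le> N - 1\<close> by (rule mult_right_mono) simp
  with components(2)
  have "card (components (decision_set K PX g x0 d Z z)) \<le> (N - 1) * ((K - 1) div 2) + 1"
    by linarith
  with components(1) show "\<exists>F. finite F \<and> card F \<le> (N - 1) * ((K - 1) div 2) + 1
      \<and> (\<forall>I\<in>F. is_interval I) \<and> disjoint F \<and> \<Union>F = decision_set K PX g x0 d Z z"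
    by (rule disjoint_intervals_of_components)
qed

end
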